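(* Let $V\subseteq\mathbb{K}[z_1,\ldots,z_n]$ be a $\mathbb{K}$-linear subspace, where $\mathbb{K}=\mathbb{R}$ or $\mathbb{C}$. (i) If $\mathbb{K}=\mathbb{R}$ and every non-zero element of $V$ is real stable, then $\dim V\le 2$. (ii) If $\mathbb{K}=\mathbb{C}$ and every non-zero element of $V$ is stable, then $\dim V\le1$.
   Context: $H=\{z\in\mathbb{C}:\Im(z)>0\}$; a polynomial is stable if it is non-zero whenever all variables lie in $H$; real stable means stable with real coefficients. *)

theory Defs
  imports "HOL-Analysis.Analysis" "HOL-Library.Poly_Mapping"
begin

text \<open>Multivariate polynomials over a ring 'a are represented as finitely supported
  maps from monomials (exponent vectors, finitely supported nat-valued exponent maps, variable i has exponent
  Poly_Mapping.lookup m i) to coefficients.\<close>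

type_synonym 'a mpoly = "(nat \<Rightarrow>\<^sub>0 nat) \<Rightarrow>\<^sub>0 'a"

definition mpolys :: "nat \<Rightarrow> 'a::zero mpoly set" where
  "mpolys n = {p. \<forall>m\<in>Poly_Mapping.keys p. Poly_Mapping.keys m \<subseteq> {..<n}}"

definition mpoly_eval :: "'a::comm_semiring_1 mpoly \<Rightarrow> (nat \<Rightarrow> 'a) \<Rightarrow> 'a" where
  "mpoly_eval p z = (\<Sum>m\<in>Poly_Mapping.keys p. Poly_Mapping.lookup p m * (\<Prod>i\<in>Poly_Mapping.keys m. z i ^ Poly_Mapping.lookup m i))"

definition mpoly_scale :: "'a::comm_semiring_1 \<Rightarrow> 'a mpoly \<Rightarrow> 'a mpoly" where
  "mpoly_scale c p = Poly_Mapping.map (\<lambda>x. c * x) p"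

definition stable :: "nat \<Rightarrow> complex mpoly \<Rightarrow> bool" where
  "stable n p \<longleftrightarrow> (\<forall>z. (\<forall>i<n. Im (z i) > 0) \<longrightarrow> mpoly_eval p z \<noteq> 0)"

definition real_stable :: "nat \<Rightarrow> real mpoly \<Rightarrow> bool" where
  "real_stable n p \<longleftrightarrow> stable n (Poly_Mapping.map complex_of_real p)"

end

theory Submission imports Defs begin

text \<open>Evaluation at the point \<open>(\<i>, \<dots>, \<i>)\<close>, which lies in the product of upper half planes,
  is a linear map into \<open>\<complex>\<close>. Stability says it has trivial kernel on the given subspace, so
  the subspace embeds linearly into \<open>\<complex>\<close>: of dimension at most 2 over \<open>\<real>\<close> and at most 1
  over \<open>\<complex>\<close>.\<close>

lemma lookup_map_zero:
  "g 0 = 0 \<Longrightarrow> Poly_Mapping.lookup (Poly_Mapping.map g p) k = g (Poly_Mapping.lookup p k)"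
  by transfer (auto simp: when_def)

lemma lookup_mpoly_scale: "Poly_Mapping.lookup (mpoly_scale c p) k = c * Poly_Mapping.lookup p k"
  by (simp add: mpoly_scale_def lookup_map_zero)

lemma vector_space_mpoly_scale: "vector_space (mpoly_scale :: 'a::field \<Rightarrow> 'a mpoly \<Rightarrow> 'a mpoly)"
  by unfold_locales
    (auto intro!: poly_mapping_eqI simp: lookup_mpoly_scale lookup_add algebra_simps)

lemma mpoly_eval_sum_superset:
  assumes "finite S" "Poly_Mapping.keys p \<subseteq> S"
  shows "mpoly_eval p z =
    (\<Sum>m\<in>S. Poly_Mapping.lookup p m * (\<Prod>i\<in>Poly_Mapping.keys m. z i ^ Poly_Mapping.lookup m i))"
  unfolding mpoly_eval_def
  by (rule sum.mono_neutral_left) (use assms in \<open>auto simp: in_keys_iff\<close>)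

lemma mpoly_eval_add: "mpoly_eval (p + q) z = mpoly_eval p z + mpoly_eval q z"
proof -
  let ?S = "Poly_Mapping.keys p \<union> Poly_Mapping.keys q"
  have "Poly_Mapping.keys (p + q) \<subseteq> ?S" by (rule keys_add)
  then show ?thesis
    by (simp add: mpoly_eval_sum_superset[of ?S] lookup_add distrib_right sum.distrib)
qed

lemma mpoly_eval_scale: "mpoly_eval (mpoly_scale c p) z = c * mpoly_eval p z"
proof -
  have "Poly_Mapping.keys (mpoly_scale c p) \<subseteq> Poly_Mapping.keys p"
    by (auto simp: in_keys_iff lookup_mpoly_scale)
  then show ?thesis
    by (simp add: mpoly_eval_sum_superset[of "Poly_Mapping.keys p"] lookup_mpoly_scale
        sum_distrib_left mult.assoc)
qed

lemma linear_mpoly_eval: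
  "Vector_Spaces.linear (mpoly_scale :: 'a::field \<Rightarrow> 'a mpoly \<Rightarrow> 'a mpoly) (*) (\<lambda>p. mpoly_eval p z)"
proof -
  interpret vector_space "mpoly_scale :: 'a \<Rightarrow> 'a mpoly \<Rightarrow> 'a mpoly"
    by (rule vector_space_mpoly_scale)
  show ?thesis
    by unfold_locales (simp_all add: mpoly_eval_add mpoly_eval_scale algebra_simps)
qed

lemma map_of_real_add:
  "Poly_Mapping.map of_real (p + q) = Poly_Mapping.map of_real p + Poly_Mapping.map of_real q"
  by (rule poly_mapping_eqI) (simp add: lookup_map_zero lookup_add)

lemma map_of_real_mpoly_scale:
  "Poly_Mapping.map of_real (mpoly_scale c p) = mpoly_scale (of_real c) (Poly_Mapping.map of_real p)"
  by (rule poly_mapping_eqI) (simp add: lookup_map_zero lookup_mpoly_scale)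

lemma linear_mpoly_eval_of_real:
  "Vector_Spaces.linear (mpoly_scale :: real \<Rightarrow> real mpoly \<Rightarrow> real mpoly) scaleR
     (\<lambda>p. mpoly_eval (Poly_Mapping.map complex_of_real p) z)"
proof -
  interpret vector_space "mpoly_scale :: real \<Rightarrow> real mpoly \<Rightarrow> real mpoly"
    by (rule vector_space_mpoly_scale)
  show ?thesis
    by unfold_locales
      (simp_all add: map_of_real_add map_of_real_mpoly_scale mpoly_eval_add mpoly_eval_scale
        scaleR_conv_of_real)
qed

lemma finite_dimensional_field_over_itself:
  "finite_dimensional_vector_space ((*) :: 'a::field \<Rightarrow> 'a \<Rightarrow> 'a) {1}"
proof -
  have "vector_space ((*) :: 'a \<Rightarrow> 'a \<Rightarrow> 'a)" "module ((*) :: 'a \<Rightarrow> 'a \<Rightarrow> 'a)"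
    by unfold_locales (auto simp: algebra_simps)
  then show ?thesis
    by (auto simp: finite_dimensional_vector_space_def finite_dimensional_vector_space_axioms_def
        module.span_singleton vector_space.independent_insert module.independent_empty)
qed

lemma subspace_dim_le_if_linear_kernel_trivial:
  assumes fd: "finite_dimensional_vector_space s2 B2"
    and lin: "Vector_Spaces.linear s1 s2 f"
    and sub: "module.subspace s1 V"
    and ker: "\<forall>x\<in>V. f x = 0 \<longrightarrow> x = 0"
  shows "(\<exists>B. finite B \<and> module.span s1 B = V) \<and> vector_space.dim s1 V \<le> card B2"
proof -
  interpret Vector_Spaces.linear s1 s2 f by (rule lin)
  interpret vs2: finite_dimensional_vector_space s2 B2 by (rule fd)
  obtain B where B: "B \<subseteq> V" "vs1.independent B" "V \<subseteq> vs1.span B" "card B = vs1.dim V"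
    by (rule vs1.basis_exists)
  have inj: "inj_on f V"
    using ker by (simp add: inj_on_iff_eq_0[OF sub])
  have span_B: "vs1.span B = V"
    using B(1,3) sub by (rule vs1.span_subspace)
  have "vs2.independent (f ` B)"
    using B(2) inj by (intro independent_injective_image) (simp_all add: span_B)
  then have "finite (f ` B)" "card (f ` B) \<le> card B2"
    using vs2.independent_card_le_dim[of "f ` B" UNIV] by (auto intro: vs2.finiteI_independent)
  moreover have "inj_on f B"
    using inj B(1) by (rule inj_on_subset)
  ultimately show ?thesis
    using span_B B(4) by (auto dest: finite_imageD simp: card_image)
qed

lemma stable_mpoly_eval_ii: "stable n p \<Longrightarrow> mpoly_eval p (\<lambda>_. \<i>) \<noteq> 0"
  by (simp add: stable_def)

theorem lemma3p2:
  fixes n :: nat and V :: "real mpoly set" and W :: "complex mpoly set"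
  shows "(V \<subseteq> mpolys n \<and> module.subspace mpoly_scale V
            \<and> (\<forall>p\<in>V. p \<noteq> 0 \<longrightarrow> real_stable n p)
           \<longrightarrow> (\<exists>B. finite B \<and> module.span mpoly_scale B = V)
              \<and> vector_space.dim mpoly_scale V \<le> 2)
       \<and> (W \<subseteq> mpolys n \<and> module.subspace mpoly_scale W
            \<and> (\<forall>p\<in>W. p \<noteq> 0 \<longrightarrow> stable n p)
           \<longrightarrow> (\<exists>B. finite B \<and> module.span mpoly_scale B = W)
              \<and> vector_space.dim mpoly_scale W \<le> 1)"
proof (rule conjI; rule impI)
  assume "V \<subseteq> mpolys n \<and> module.subspace mpoly_scale V \<and> (\<forall>p\<in>V. p \<noteq> 0 \<longrightarrow> real_stable n p)"
  then have sub: "module.subspace mpoly_scale V" and stab: "\<forall>p\<in>V. p \<noteq> 0 \<longrightarrow> real_stable n p"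
    by blast+
  have ker: "\<forall>p\<in>V. mpoly_eval (Poly_Mapping.map complex_of_real p) (\<lambda>_. \<i>) = 0 \<longrightarrow> p = 0"
    using stab stable_mpoly_eval_ii unfolding real_stable_def by blast
  from subspace_dim_le_if_linear_kernel_trivial[OF eucl.finite_dimensional_vector_space_axioms
      linear_mpoly_eval_of_real sub ker]
  show "(\<exists>B. finite B \<and> module.span mpoly_scale B = V) \<and> vector_space.dim mpoly_scale V \<le> 2"
    by simp
next
  assume "W \<subseteq> mpolys n \<and> module.subspace mpoly_scale W \<and> (\<forall>p\<in>W. p \<noteq> 0 \<longrightarrow> stable n p)"
  then have sub: "module.subspace mpoly_scale W" and stab: "\<forall>p\<in>W. p \<noteq> 0 \<longrightarrow> stable n p"
    by blast+
  have ker: "\<forall>p\<in>W. mpoly_eval p (\<lambda>_. \<i>) = 0 \<longrightarrow> p = 0"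
    using stab stable_mpoly_eval_ii by blast
  from subspace_dim_le_if_linear_kernel_trivial[OF finite_dimensional_field_over_itself
      linear_mpoly_eval sub ker]
  show "(\<exists>B. finite B \<and> module.span mpoly_scale B = W) \<and> vector_space.dim mpoly_scale W \<le> 1"
    by simp
qed

end
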